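(* Let $q$ be a self-join-free Boolean conjunctive query and let $C$ be an elementary cycle in the M-graph of $q$ (identified with its set of atoms). Let $\mathbf{db}$ be a database and let $\mathcal{S}$ be a strong component of the $\hookrightarrow_C$-graph of $\mathbf{db}$. If some fact of $\mathcal{S}$ belongs to the maximal garbage set for $C$ in $\mathbf{db}$, then every fact of $\mathcal{S}$ belongs to the maximal garbage set for $C$ in $\mathbf{db}$.
   Context: Every relation name has a signature $[n,k]$ ($1\le k\le n$; primary-key positions $1,\dots,k$) and a mode in $\{\mathsf{c},\mathsf{i}\}$. For an atom $F$, $\mathrm{key}(F)$ = variables at primary-key positions, $\mathrm{vars}(F)$ = all its variables. Facts are variable-free atoms; key-equal facts share relation name and primary-key values. A database is a finite set of facts with no two distinct key-equal facts of mode $\mathsf{c}$, all of whose relation names occur in $q$; the block of $A$ is the set of facts of $\mathbf{db}$ key-equal to $A$; a repair is a maximal subset without two distinct key-equal facts. A self-join-free Boolean conjunctive query is a finite set of atoms with distinct relation names; $\mathrm{atom}(A)$ is the atom of $q$ with the relation name of fact $A$. $\mathcal{K}(p)=\{\mathrm{key}(F)\to\mathrm{vars}(F)\mid F\in p\}$; $q^{\mathsf{c}}$ = atoms of mode $\mathsf{c}$. M-graph of $q$: vertices atoms of $q$, edge $F\to G$ ($F\ne G$) iff $\mathcal{K}(q^{\mathsf{c}})\models\mathrm{vars}(F)\to\mathrm{key}(G)$. $\hookrightarrow$-graph: vertices facts of $\mathbf{db}$, edge $A\hookrightarrow B$ iff there are a valuation $\theta$ of the variables of $q$ and an M-graph edge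 $F\to G$ with $\theta(q)\subseteq\mathbf{db}$, $A=\theta(F)$, $B$ key-equal to $\theta(G)$. The $\hookrightarrow_C$-graph: vertices the facts $A$ with $\mathrm{atom}(A)$ in $C$, edge $A\hookrightarrow_C B$ iff $A\hookrightarrow B$ and $C$ has an edge from $\mathrm{atom}(A)$ to $\mathrm{atom}(B)$. A subset $\mathbf{o}\subseteq\mathbf{db}$ is a garbage set for $q_0\subseteq q$ in $\mathbf{db}$ if (1) for every $A\in\mathbf{o}$, $\mathrm{atom}(A)\in q_0$ and the block of $A$ is included in $\mathbf{o}$; and (2) there is a repair $\mathbf{r}$ of $\mathbf{o}$ such that for every valuation $\theta$ of the variables of $q$, if $\theta(q)\subseteq(\mathbf{db}\setminus\mathbf{o})\cup\mathbf{r}$ then $\theta(q_0)\cap\mathbf{r}=\emptyset$. Garbage sets are closed under union; the maximal garbage set is the largest one. *)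

theory Defs
  imports Main
begin

datatype mode = ModeC | ModeI

record 'r schema =
  arity :: "'r \<Rightarrow> nat"
  keylen :: "'r \<Rightarrow> nat"
  rmode :: "'r \<Rightarrow> mode"

definition wf_schema :: "'r schema \<Rightarrow> bool" where
  "wf_schema S \<longleftrightarrow> (\<forall>R. 1 \<le> keylen S R \<and> keylen S R \<le> arity S R)"

datatype ('v, 'c) trm = Var 'v | Cst 'c

type_synonym ('r, 'v, 'c) atom = "'r \<times> ('v, 'c) trm list"
type_synonym ('r, 'c) fact = "'r \<times> 'c list"

definition rel :: "'r \<times> 'a \<Rightarrow> 'r" where "rel F = fst F"

fun tvars :: "('v, 'c) trm \<Rightarrow> 'v set" where
  "tvars (Var v) = {v}" | "tvars (Cst c) = {}"

definition vars :: "('r, 'v, 'c) atom \<Rightarrow> 'v set" where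
  "vars F = \<Union> (tvars ` set (snd F))"

definition key :: "'r schema \<Rightarrow> ('r, 'v, 'c) atom \<Rightarrow> 'v set" where
  "key S F = \<Union> (tvars ` set (take (keylen S (fst F)) (snd F)))"

fun tval :: "('v \<Rightarrow> 'c) \<Rightarrow> ('v, 'c) trm \<Rightarrow> 'c" where
  "tval \<theta> (Var v) = \<theta> v" | "tval \<theta> (Cst c) = c"

definition inst :: "('v \<Rightarrow> 'c) \<Rightarrow> ('r, 'v, 'c) atom \<Rightarrow> ('r, 'c) fact" where
  "inst \<theta> F = (fst F, map (tval \<theta>) (snd F))"

definition key_equal :: "'r schema \<Rightarrow> ('r, 'c) fact \<Rightarrow> ('r, 'c) fact \<Rightarrow> bool" where
  "key_equal S A B \<longleftrightarrow> fst A = fst B \<and>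
     take (keylen S (fst A)) (snd A) = take (keylen S (fst B)) (snd B)"

definition sjf_query :: "'r schema \<Rightarrow> ('r, 'v, 'c) atom set \<Rightarrow> bool" where
  "sjf_query S q \<longleftrightarrow> finite q \<and>
     (\<forall>F\<in>q. length (snd F) = arity S (fst F)) \<and>
     (\<forall>F\<in>q. \<forall>G\<in>q. fst F = fst G \<longrightarrow> F = G)"

definition is_database :: "'r schema \<Rightarrow> ('r, 'v, 'c) atom set \<Rightarrow> ('r, 'c) fact set \<Rightarrow> bool" where
  "is_database S q db \<longleftrightarrow> finite db \<and>
     (\<forall>A\<in>db. length (snd A) = arity S (fst A)) \<and>
     (\<forall>A\<in>db. fst A \<in> fst ` q) \<and>
     (\<forall>A\<in>db. \<forall>B\<in>db. rmode S (fst A) = ModeC \<and> key_equal S A B \<longrightarrow> A = B)"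

definition block :: "'r schema \<Rightarrow> ('r, 'c) fact set \<Rightarrow> ('r, 'c) fact \<Rightarrow> ('r, 'c) fact set" where
  "block S db A = {B \<in> db. key_equal S A B}"

definition consistent :: "'r schema \<Rightarrow> ('r, 'c) fact set \<Rightarrow> bool" where
  "consistent S r \<longleftrightarrow> (\<forall>A\<in>r. \<forall>B\<in>r. key_equal S A B \<longrightarrow> A = B)"

definition is_repair :: "'r schema \<Rightarrow> ('r, 'c) fact set \<Rightarrow> ('r, 'c) fact set \<Rightarrow> bool" where
  "is_repair S db r \<longleftrightarrow> r \<subseteq> db \<and> consistent S r \<and>
     (\<forall>r'. r \<subset> r' \<and> r' \<subseteq> db \<longrightarrow> \<not> consistent S r')"

definition atom_of :: "('r, 'v, 'c) atom set \<Rightarrow> ('r, 'c) fact \<Rightarrow> ('r, 'v, 'c) atom" where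
  "atom_of q A = (THE F. F \<in> q \<and> fst F = fst A)"

definition fd_closure :: "('v set \<times> 'v set) set \<Rightarrow> 'v set \<Rightarrow> 'v set" where
  "fd_closure K X = \<Inter> {Y. X \<subseteq> Y \<and> (\<forall>(L, R)\<in>K. L \<subseteq> Y \<longrightarrow> R \<subseteq> Y)}"

definition fd_entails :: "('v set \<times> 'v set) set \<Rightarrow> 'v set \<Rightarrow> 'v set \<Rightarrow> bool" where
  "fd_entails K X Y \<longleftrightarrow> Y \<subseteq> fd_closure K X"

definition Kfds :: "'r schema \<Rightarrow> ('r, 'v, 'c) atom set \<Rightarrow> ('v set \<times> 'v set) set" where
  "Kfds S p = (\<lambda>F. (key S F, vars F)) ` p"

definition cons_atoms :: "'r schema \<Rightarrow> ('r, 'v, 'c) atom set \<Rightarrow> ('r, 'v, 'c) atom set" where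
  "cons_atoms S q = {F \<in> q. rmode S (fst F) = ModeC}"

definition medge :: "'r schema \<Rightarrow> ('r, 'v, 'c) atom set \<Rightarrow> ('r, 'v, 'c) atom \<Rightarrow> ('r, 'v, 'c) atom \<Rightarrow> bool" where
  "medge S q F G \<longleftrightarrow> F \<in> q \<and> G \<in> q \<and> F \<noteq> G \<and>
     fd_entails (Kfds S (cons_atoms S q)) (vars F) (key S G)"

text \<open>An elementary cycle of the M-graph, given as the list of its (pairwise distinct)
  atoms in cyclic order; its edges are the consecutive pairs (last to first included).\<close>
definition cycle_edge :: "('r, 'v, 'c) atom list \<Rightarrow> ('r, 'v, 'c) atom \<Rightarrow> ('r, 'v, 'c) atom \<Rightarrow> bool" where
  "cycle_edge cyc F G \<longleftrightarrow>
     (\<exists>i < length cyc. F = cyc ! i \<and> G = cyc ! ((i + 1) mod length cyc))"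

definition elementary_cycle :: "'r schema \<Rightarrow> ('r, 'v, 'c) atom set \<Rightarrow> ('r, 'v, 'c) atom list \<Rightarrow> bool" where
  "elementary_cycle S q cyc \<longleftrightarrow> length cyc \<ge> 2 \<and> distinct cyc \<and> set cyc \<subseteq> q \<and>
     (\<forall>F G. cycle_edge cyc F G \<longrightarrow> medge S q F G)"

definition hook :: "'r schema \<Rightarrow> ('r, 'v, 'c) atom set \<Rightarrow> ('r, 'c) fact set \<Rightarrow> ('r, 'c) fact \<Rightarrow> ('r, 'c) fact \<Rightarrow> bool" where
  "hook S q db A B \<longleftrightarrow> A \<in> db \<and> B \<in> db \<and>
     (\<exists>(\<theta> :: 'v \<Rightarrow> 'c) F G. medge S q F G \<and> inst \<theta> ` q \<subseteq> db \<and> A = inst \<theta> F \<and>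
        key_equal S B (inst \<theta> G))"

definition hookC_vertices :: "('r, 'v, 'c) atom set \<Rightarrow> ('r, 'v, 'c) atom list \<Rightarrow> ('r, 'c) fact set \<Rightarrow> ('r, 'c) fact set" where
  "hookC_vertices q cyc db = {A \<in> db. atom_of q A \<in> set cyc}"

definition hookC :: "'r schema \<Rightarrow> ('r, 'v, 'c) atom set \<Rightarrow> ('r, 'v, 'c) atom list \<Rightarrow> ('r, 'c) fact set \<Rightarrow> ('r, 'c) fact \<Rightarrow> ('r, 'c) fact \<Rightarrow> bool" where
  "hookC S q cyc db A B \<longleftrightarrow> A \<in> hookC_vertices q cyc db \<and> B \<in> hookC_vertices q cyc db \<and>
     hook S q db A B \<and> cycle_edge cyc (atom_of q A) (atom_of q B)"

definition strong_component :: "'a set \<Rightarrow> ('a \<Rightarrow> 'a \<Rightarrow> bool) \<Rightarrow> 'a set \<Rightarrow> bool" where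
  "strong_component V E C \<longleftrightarrow> C \<noteq> {} \<and> C \<subseteq> V \<and>
     (\<forall>a\<in>C. \<forall>b\<in>C. E\<^sup>*\<^sup>* a b) \<and>
     (\<forall>a\<in>C. \<forall>b\<in>V. E\<^sup>*\<^sup>* a b \<and> E\<^sup>*\<^sup>* b a \<longrightarrow> b \<in> C)"

definition garbage_set :: "'r schema \<Rightarrow> ('r, 'v, 'c) atom set \<Rightarrow> ('r, 'v, 'c) atom set \<Rightarrow> ('r, 'c) fact set \<Rightarrow> ('r, 'c) fact set \<Rightarrow> bool" where
  "garbage_set S q q0 db gs \<longleftrightarrow> gs \<subseteq> db \<and>
     (\<forall>A\<in>gs. atom_of q A \<in> q0 \<and> block S db A \<subseteq> gs) \<and>
     (\<exists>r. is_repair S gs r \<and>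
        (\<forall>\<theta> :: 'v \<Rightarrow> 'c. inst \<theta> ` q \<subseteq> (db - gs) \<union> r \<longrightarrow> inst \<theta> ` q0 \<inter> r = {}))"

text \<open>The maximal garbage set: the union of all garbage sets (garbage sets are
  closed under union, so this is the largest one).\<close>
definition max_garbage :: "'r schema \<Rightarrow> ('r, 'v, 'c) atom set \<Rightarrow> ('r, 'v, 'c) atom set \<Rightarrow> ('r, 'c) fact set \<Rightarrow> ('r, 'c) fact set" where
  "max_garbage S q q0 db = \<Union> {gs. garbage_set S q q0 db gs}"

end

theory Submission
  imports Defs
begin

text \<open>If \<open>A \<hookrightarrow> B\<close> via an embedding \<open>\<theta>\<close> and an M-graph edge \<open>F \<rightarrow> G\<close>, then every
  embedding \<open>\<theta>'\<close> with \<open>\<theta>'(F) = A\<close> agrees with \<open>\<theta>\<close> on the closure of \<open>vars F\<close> under the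
  consistent FDs, hence maps \<open>G\<close> into the block of \<open>B\<close>. So if \<open>B\<close> lies in a garbage set \<open>O\<close>
  with witnessing repair \<open>r\<close>, no embedding into \<open>(db - O) \<union> r\<close> can use \<open>A\<close> for the cycle,
  and \<open>O \<union> block(A)\<close> is again a garbage set, witnessed by \<open>insert A r\<close>. Thus membership
  in the maximal garbage set propagates backwards along \<open>\<hookrightarrow>\<^sub>C\<close>, and a strong component
  is reached backwards from any of its facts.\<close>

lemma tval_eq_iff: "tval \<theta> t = tval \<theta>' t \<longleftrightarrow> (\<forall>v\<in>tvars t. \<theta> v = \<theta>' v)"
  by (cases t) auto

lemma map_tval_eq_iff:
  "map (tval \<theta>) ts = map (tval \<theta>') ts \<longleftrightarrow> (\<forall>t\<in>set ts. \<forall>v\<in>tvars t. \<theta> v = \<theta>' v)"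
  by (induction ts) (auto simp: tval_eq_iff)

lemma inst_eq_iff: "inst \<theta> H = inst \<theta>' H \<longleftrightarrow> (\<forall>v\<in>vars H. \<theta> v = \<theta>' v)"
  unfolding inst_def vars_def by (auto simp: map_tval_eq_iff tval_eq_iff)

lemma key_equal_inst_iff:
  "key_equal S (inst \<theta> H) (inst \<theta>' H) \<longleftrightarrow> (\<forall>v\<in>key S H. \<theta> v = \<theta>' v)"
  unfolding key_equal_def inst_def key_def by (auto simp: take_map map_tval_eq_iff tval_eq_iff)

lemma fst_inst [simp]: "fst (inst \<theta> H) = fst H"
  by (simp add: inst_def)

lemma key_equal_refl [simp]: "key_equal S A A"
  unfolding key_equal_def by simp

lemma key_equal_sym: "key_equal S A B \<Longrightarrow> key_equal S B A"
  unfolding key_equal_def by auto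

lemma key_equal_trans: "key_equal S A B \<Longrightarrow> key_equal S B C \<Longrightarrow> key_equal S A C"
  unfolding key_equal_def by auto

lemma fd_closure_least:
  assumes "X \<subseteq> Y" and "\<forall>(L, R)\<in>K. L \<subseteq> Y \<longrightarrow> R \<subseteq> Y"
  shows "fd_closure K X \<subseteq> Y"
  unfolding fd_closure_def using assms by (intro Inter_lower) simp

lemma atom_of_eq:
  assumes "sjf_query S q" "F \<in> q" "fst F = fst A"
  shows "atom_of q A = F"
  unfolding atom_of_def
  using assms unfolding sjf_query_def by (intro the_equality) metis+

lemma atom_of_block:
  "X \<in> block S db A \<Longrightarrow> atom_of q X = atom_of q A"
  unfolding block_def key_equal_def atom_of_def by simp

text \<open>The agreement set of two embeddings into a database is closed under the key FDs of
  the consistent atoms, because consistent relations have singleton blocks.\<close>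
lemma medge_inst_key_equal:
  assumes db: "is_database S q db"
    and \<theta>: "inst \<theta> ` q \<subseteq> db" and \<theta>': "inst \<theta>' ` q \<subseteq> db"
    and e: "medge S q F G" and eqF: "inst \<theta> F = inst \<theta>' F"
  shows "key_equal S (inst \<theta> G) (inst \<theta>' G)"
proof -
  define Y where "Y = {v. \<theta> v = \<theta>' v}"
  have consistent_closed: "vars H \<subseteq> Y"
    if H: "H \<in> q" "rmode S (fst H) = ModeC" "key S H \<subseteq> Y" for H
  proof -
    have "key_equal S (inst \<theta> H) (inst \<theta>' H)"
      using H(3) unfolding key_equal_inst_iff Y_def by auto
    with H \<theta> \<theta>' db have "inst \<theta> H = inst \<theta>' H"
      unfolding is_database_def by (metis fst_inst image_subset_iff)
    then show ?thesis unfolding inst_eq_iff Y_def by auto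
  qed
  have "vars F \<subseteq> Y" using eqF unfolding Y_def inst_eq_iff by auto
  then have "fd_closure (Kfds S (cons_atoms S q)) (vars F) \<subseteq> Y"
    using consistent_closed
    by (intro fd_closure_least) (auto simp: Kfds_def cons_atoms_def)
  moreover have "key S G \<subseteq> fd_closure (Kfds S (cons_atoms S q)) (vars F)"
    using e unfolding medge_def fd_entails_def by auto
  ultimately show ?thesis unfolding key_equal_inst_iff Y_def by auto
qed

lemma is_repair_insert_block:
  assumes rep: "is_repair S gs r" and "gs \<subseteq> db" and "A \<in> db"
    and disj: "block S db A \<inter> gs = {}"
  shows "is_repair S (gs \<union> block S db A) (insert A r)"
  unfolding is_repair_def
proof (intro conjI allI impI)
  have r: "r \<subseteq> gs" "consistent S r" using rep unfolding is_repair_def by auto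
  have no_conflict: "\<not> key_equal S A Y" if "Y \<in> r" for Y
    using that r(1) \<open>gs \<subseteq> db\<close> disj unfolding block_def by auto
  show "insert A r \<subseteq> gs \<union> block S db A"
    using r(1) \<open>A \<in> db\<close> unfolding block_def by auto
  show "consistent S (insert A r)"
    using r(2) no_conflict key_equal_sym unfolding consistent_def by blast
next
  fix r' assume r': "insert A r \<subset> r' \<and> r' \<subseteq> gs \<union> block S db A"
  show "\<not> consistent S r'"
  proof
    assume c: "consistent S r'"
    from r' obtain X where X: "X \<in> r'" "X \<notin> insert A r" by auto
    show False
    proof (cases "X \<in> gs")
      case True
      then have "r \<subset> r' \<inter> gs" using r' X rep unfolding is_repair_def by auto
      moreover have "consistent S (r' \<inter> gs)" using c unfolding consistent_def by auto
      ultimately show False using rep unfolding is_repair_def by blast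
    next
      case False
      then have "key_equal S A X" using r' X unfolding block_def by auto
      with c X r' show False unfolding consistent_def by auto
    qed
  qed
qed

lemma garbage_set_block_disjoint:
  assumes garbage: "garbage_set S q q0 db gs" and "A \<in> db" "A \<notin> gs"
  shows "block S db A \<inter> gs = {}"
proof (rule ccontr)
  assume "block S db A \<inter> gs \<noteq> {}"
  then obtain X where "X \<in> gs" "key_equal S A X" unfolding block_def by auto
  with assms have "A \<in> gs"
    unfolding garbage_set_def block_def by (blast dest: key_equal_sym)
  with \<open>A \<notin> gs\<close> show False ..
qed

lemma hook_extends_garbage_set:
  fixes q :: "('r, 'v, 'c) atom set"
  assumes sjf: "sjf_query S q" and db: "is_database S q db" and q0: "q0 \<subseteq> q"
    and garbage: "garbage_set S q q0 db gs" and "B \<in> gs" and "A \<notin> gs"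
    and hook: "hook S q db A B" and A_q0: "atom_of q A \<in> q0"
  shows "garbage_set S q q0 db (gs \<union> block S db A)"
proof -
  from hook obtain \<theta> :: "'v \<Rightarrow> 'c" and F G where e: "medge S q F G"
    and \<theta>: "inst \<theta> ` q \<subseteq> db" and AF: "A = inst \<theta> F" and BG: "key_equal S B (inst \<theta> G)"
    and "A \<in> db" unfolding hook_def by blast
  have "F \<in> q" "G \<in> q" using e unfolding medge_def by auto
  from garbage have "gs \<subseteq> db" and gs_atoms: "\<forall>X\<in>gs. atom_of q X \<in> q0 \<and> block S db X \<subseteq> gs"
    unfolding garbage_set_def by auto
  from garbage obtain r where rep: "is_repair S gs r"
    and r_garbage: "\<forall>\<theta>' :: 'v \<Rightarrow> 'c. inst \<theta>' ` q \<subseteq> (db - gs) \<union> r \<longrightarrow> inst \<theta>' ` q0 \<inter> r = {}"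
    unfolding garbage_set_def by blast
  have "r \<subseteq> gs" using rep unfolding is_repair_def by auto
  have "atom_of q B = G" using atom_of_eq[OF sjf \<open>G \<in> q\<close>] BG
    unfolding key_equal_def inst_def by simp
  with gs_atoms \<open>B \<in> gs\<close> have "G \<in> q0" "block S db B \<subseteq> gs" by auto
  have A_unused: "A \<notin> inst \<theta>' ` q0" if \<theta>': "inst \<theta>' ` q \<subseteq> (db - gs) \<union> r" for \<theta>'
  proof
    assume "A \<in> inst \<theta>' ` q0"
    then obtain H where "H \<in> q0" "inst \<theta>' H = A" by auto
    with q0 sjf \<open>F \<in> q\<close> AF have eqF: "inst \<theta>' F = inst \<theta> F"
      unfolding sjf_query_def by (metis fst_inst subsetD)
    have \<theta>'_db: "inst \<theta>' ` q \<subseteq> db" using \<theta>' \<open>r \<subseteq> gs\<close> \<open>gs \<subseteq> db\<close> by blast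
    have "key_equal S B (inst \<theta>' G)"
      using key_equal_trans[OF BG medge_inst_key_equal[OF db \<theta> \<theta>'_db e eqF[symmetric]]] .
    with \<theta>'_db \<open>G \<in> q\<close> \<open>block S db B \<subseteq> gs\<close> \<theta> have "inst \<theta>' G \<in> r"
      using \<theta>' unfolding block_def by blast
    with r_garbage \<theta>' \<open>G \<in> q0\<close> show False by blast
  qed
  show ?thesis
    unfolding garbage_set_def
  proof (intro conjI ballI exI[of _ "insert A r"] allI impI)
    show "gs \<union> block S db A \<subseteq> db" using \<open>gs \<subseteq> db\<close> unfolding block_def by auto
  next
    fix X assume "X \<in> gs \<union> block S db A"
    then show "atom_of q X \<in> q0" "block S db X \<subseteq> gs \<union> block S db A"
      using gs_atoms A_q0 atom_of_block[of X S db A q]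
      unfolding block_def by (auto dest: key_equal_trans)
  next
    show "is_repair S (gs \<union> block S db A) (insert A r)"
      using is_repair_insert_block[OF rep \<open>gs \<subseteq> db\<close> \<open>A \<in> db\<close>]
        garbage_set_block_disjoint[OF garbage \<open>A \<in> db\<close> \<open>A \<notin> gs\<close>] .
  next
    fix \<theta>' :: "'v \<Rightarrow> 'c"
    assume "inst \<theta>' ` q \<subseteq> (db - (gs \<union> block S db A)) \<union> insert A r"
    then have \<theta>': "inst \<theta>' ` q \<subseteq> (db - gs) \<union> r" using \<open>A \<notin> gs\<close> \<open>A \<in> db\<close> by auto
    then show "inst \<theta>' ` q0 \<inter> insert A r = {}" using r_garbage A_unused by blast
  qed
qed

lemma hook_max_garbage:
  assumes sjf: "sjf_query S q" and db: "is_database S q db" and q0: "q0 \<subseteq> q"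
    and hook: "hook S q db A B" and "atom_of q A \<in> q0" and "B \<in> max_garbage S q q0 db"
  shows "A \<in> max_garbage S q q0 db"
proof -
  from \<open>B \<in> max_garbage S q q0 db\<close> obtain gs where garbage: "garbage_set S q q0 db gs" "B \<in> gs"
    unfolding max_garbage_def by blast
  have "A \<in> block S db A" using hook unfolding hook_def block_def by auto
  then have "\<exists>gs'. garbage_set S q q0 db gs' \<and> A \<in> gs'"
  proof (cases "A \<in> gs")
    case False
    with hook_extends_garbage_set[OF sjf db q0 garbage(1,2) False hook \<open>atom_of q A \<in> q0\<close>]
      \<open>A \<in> block S db A\<close> show ?thesis by blast
  qed (use garbage in blast)
  then show ?thesis unfolding max_garbage_def by blast
qed

theorem corollary20:
  fixes S :: "'r schema" and q :: "('r, 'v, 'c) atom set"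
    and cyc :: "('r, 'v, 'c) atom list" and db :: "('r, 'c) fact set"
    and SC :: "('r, 'c) fact set"
  assumes "wf_schema S"
    and "sjf_query S q"
    and "elementary_cycle S q cyc"
    and "is_database S q db"
    and "strong_component (hookC_vertices q cyc db) (hookC S q cyc db) SC"
    and "\<exists>A\<in>SC. A \<in> max_garbage S q (set cyc) db"
  shows "\<forall>A\<in>SC. A \<in> max_garbage S q (set cyc) db"
proof
  fix X assume "X \<in> SC"
  from assms(6) obtain A where A: "A \<in> SC" "A \<in> max_garbage S q (set cyc) db" by blast
  have cyc_q: "set cyc \<subseteq> q" using assms(3) unfolding elementary_cycle_def by auto
  have "(hookC S q cyc db)\<^sup>*\<^sup>* X A"
    using assms(5) \<open>X \<in> SC\<close> A(1) unfolding strong_component_def by blast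
  then show "X \<in> max_garbage S q (set cyc) db"
  proof (induction rule: converse_rtranclp_induct)
    case base
    show ?case using A(2) .
  next
    case (step Y Z)
    then show ?case
      using hook_max_garbage[OF assms(2,4) cyc_q]
      unfolding hookC_def hookC_vertices_def by blast
  qed
qed

end
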